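(* For every fixed integer $r\ge 1$ there is a constant $C_r>0$ such that the following holds. Let $n\ge 1$ and let $\mathbf a=(a_1,\dots,a_n)$ be real numbers such that for all disjoint subsets $x,y\subset[n]$, not both empty, with $|x|+|y|\le 2r$, we have $\sum_{i\in x}a_i\ne\sum_{j\in y}a_j$. Then \[\rho(\mathbf a):=\max_{\alpha\in\mathbb R}\Pr\big[\epsilon_1a_1+\cdots+\epsilon_na_n=\alpha\big]\le C_r\, n^{-r-1/2},\] where $\epsilon_1,\dots,\epsilon_n$ are independent random variables with $\Pr[\epsilon_i=0]=\Pr[\epsilon_i=1]=1/2$.
   Context: $[n]=\{1,\dots,n\}$. *)

theory Defs
  imports "HOL-Analysis.Analysis"
begin

text \<open>Probability that eps_1 a_1 + ... + eps_n a_n = alpha, where eps_i are independent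
  uniform on {0,1}: a choice of eps corresponds to the subset S = {i. eps_i = 1} of [n],
  all 2^n subsets being equally likely.\<close>
definition prob_sum :: "nat \<Rightarrow> (nat \<Rightarrow> real) \<Rightarrow> real \<Rightarrow> real" where
  "prob_sum n a \<alpha> = real (card {S. S \<subseteq> {1..n} \<and> (\<Sum>i\<in>S. a i) = \<alpha>}) / 2 ^ n"

definition rho :: "nat \<Rightarrow> (nat \<Rightarrow> real) \<Rightarrow> real" where
  "rho n a = (SUP \<alpha>. prob_sum n a \<alpha>)"

end

theory Submission
  imports Defs "HOL-Number_Theory.Cong"
begin

text \<open>Replace the real weights by integers \<open>b\<^sub>i\<close> with the same coincidences among subset sums
  (simultaneous Diophantine approximation) and work modulo a prime p exceeding all differences
  of subset sums. Fourier inversion bounds the probability by \<open>(1/p) \<Sum>\<^sub>t exp (- G(t)\<^sup>2 / 8)\<close>, where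
  \<open>G(t)\<^sup>2 = \<Sum>\<^sub>i \<bar>1 - e(b\<^sub>i t / p)\<bar>\<^sup>2\<close> and \<open>e(x) = exp (2 \<pi> i x)\<close>. G is subadditive, so the k-fold sumset
  of the sublevel set \<open>{G \<le> c}\<close> lies in \<open>{G \<le> k c}\<close>, and by Cauchy-Davenport the sublevel sets
  grow at most linearly in c. At \<open>c\<^sub>0 = \<surd>n / 2r\<close> their size is controlled by a second moment:
  the sums \<open>\<sigma>(x)\<close> of the r-element subsets x are distinct modulo p, so
  \<open>W(t) = \<Sum>\<^sub>x e(\<sigma>(x) t / p)\<close> has mean square \<open>binom n r\<close>, while \<open>\<bar>W(t)\<bar> \<ge> binom n r / 2\<close> on
  \<open>{G \<le> c\<^sub>0}\<close>. Summing over the level sets of G gives the bound of order \<open>n\<^sup>-\<^sup>r\<^sup>-\<^sup>1\<^sup>/\<^sup>2\<close>.\<close>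

section \<open>Cauchy-Davenport\<close>

definition sumset_mod :: "nat \<Rightarrow> nat set \<Rightarrow> nat set \<Rightarrow> nat set" where
  "sumset_mod p A B = (\<lambda>(x, y). (x + y) mod p) ` (A \<times> B)"

lemma sumset_mod_subset: "p > 0 \<Longrightarrow> sumset_mod p A B \<subseteq> {..<p}"
  unfolding sumset_mod_def by auto

lemma inj_on_add_mod: "inj_on (\<lambda>x::nat. (x + e) mod p) {..<p}"
proof (rule inj_onI)
  fix x y assume "x \<in> {..<p}" "y \<in> {..<p}" "(x + e) mod p = (y + e) mod p"
  then have "[x + e = y + e] (mod p)" by (simp add: cong_def)
  then have "[x = y] (mod p)" by (simp add: cong_add_rcancel_nat)
  then show "x = y" using \<open>x \<in> {..<p}\<close> \<open>y \<in> {..<p}\<close> by (simp add: cong_def)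
qed

lemma card_image_add_mod:
  fixes X :: "nat set"
  assumes "X \<subseteq> {..<p}"
  shows "card ((\<lambda>x. (x + e) mod p) ` X) = card X"
  using inj_on_subset[OF inj_on_add_mod assms] by (rule card_image)

lemma card_le_card_sumset_mod:
  assumes "A \<subseteq> {..<p}" "b \<in> B" "p > 0"
  shows "card A \<le> card (sumset_mod p A B)"
proof -
  have "(\<lambda>x. (x + b) mod p) ` A \<subseteq> sumset_mod p A B"
    unfolding sumset_mod_def using assms by force
  moreover have "finite (sumset_mod p A B)"
    using sumset_mod_subset[OF assms(3)] finite_subset by blast
  ultimately show ?thesis using card_image_add_mod[OF assms(1)] by (metis card_mono)
qed

text \<open>Since d is invertible modulo p, every residue has the form \<open>a + k d\<close>.\<close>
lemma add_mod_closed_imp_all: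
  fixes p d a :: nat
  assumes p: "prime p" and d: "0 < d" "d < p" and A: "A \<subseteq> {..<p}" "a \<in> A"
    and closed: "\<forall>x\<in>A. (x + d) mod p \<in> A"
  shows "A = {..<p}"
proof -
  have multiples: "(a + k * d) mod p \<in> A" for k
  proof (induction k)
    case 0 then show ?case using A by auto
  next
    case (Suc k)
    have "(a + Suc k * d) mod p = ((a + k * d) + d) mod p"
      by (simp add: algebra_simps)
    also have "\<dots> = ((a + k * d) mod p + d) mod p"
      by (rule mod_add_left_eq[symmetric])
    finally show ?case using closed Suc.IH by metis
  qed
  have "coprime d p" using p d
    by (metis nat_dvd_not_less prime_imp_coprime_nat coprime_commute)
  then obtain u where u: "[d * u = 1] (mod p)" using cong_solve_coprime_nat[of d p] by auto
  have "x \<in> A" if x: "x < p" for x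
  proof -
    define k where "k = u * (x + p - a mod p)"
    have "[a + k * d = a + (x + p - a mod p) * (d * u)] (mod p)"
      unfolding k_def by (simp add: ac_simps)
    also have "[a + (x + p - a mod p) * (d * u) = a + (x + p - a mod p) * 1] (mod p)"
      by (intro cong_add cong_mult cong_refl u)
    also have "a + (x + p - a mod p) * 1 = (a - a mod p) + x + p"
      using mod_less_eq_dividend[of a p] mod_less_divisor[OF prime_gt_0_nat[OF p], of a] by linarith
    also have "[(a - a mod p) + x + p = x] (mod p)"
      by (simp add: cong_def minus_mod_eq_mult_div)
    finally have "(a + k * d) mod p = x" using x by (simp add: cong_def)
    then show ?thesis using multiples[of k] by simp
  qed
  then show ?thesis using A by auto
qed

text \<open>Dyson's e-transform \<open>(A, B) \<mapsto> (A \<union> (B + e), {y \<in> B. y + e \<in> A})\<close> shrinks the sumset and keeps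
  the total size.\<close>
lemma sumset_mod_e_transform_subset:
  "sumset_mod p (A \<union> (\<lambda>x. (x + e) mod p) ` B) {y \<in> B. (y + e) mod p \<in> A} \<subseteq> sumset_mod p A B"
proof
  fix z assume "z \<in> sumset_mod p (A \<union> (\<lambda>x. (x + e) mod p) ` B) {y \<in> B. (y + e) mod p \<in> A}"
  then obtain x y where xy: "x \<in> A \<union> (\<lambda>x. (x + e) mod p) ` B" "y \<in> B" "(y + e) mod p \<in> A"
    "z = (x + y) mod p" unfolding sumset_mod_def by auto
  show "z \<in> sumset_mod p A B"
  proof (cases "x \<in> A")
    case True then show ?thesis using xy unfolding sumset_mod_def by force
  next
    case False
    then obtain b where b: "b \<in> B" "x = (b + e) mod p" using xy by auto
    then have "z = ((y + e) mod p + b) mod p" using xy by (simp add: mod_add_left_eq mod_add_right_eq ac_simps)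
    then show ?thesis using b xy unfolding sumset_mod_def by (intro image_eqI[of _ _ "((y + e) mod p, b)"]) auto
  qed
qed

lemma card_e_transform:
  fixes A B :: "nat set"
  assumes A: "A \<subseteq> {..<p}" and B: "B \<subseteq> {..<p}"
  shows "card (A \<union> (\<lambda>x. (x + e) mod p) ` B) + card {y \<in> B. (y + e) mod p \<in> A} = card A + card B"
proof -
  let ?B' = "{y \<in> B. (y + e) mod p \<in> A}"
  have "A \<inter> (\<lambda>x. (x + e) mod p) ` B = (\<lambda>x. (x + e) mod p) ` ?B'" by auto
  then have "card (A \<inter> (\<lambda>x. (x + e) mod p) ` B) = card ?B'"
    using card_image_add_mod[of ?B' p e] B by auto
  moreover have "card (A \<union> (\<lambda>x. (x + e) mod p) ` B) + card (A \<inter> (\<lambda>x. (x + e) mod p) ` B)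
      = card A + card B"
    using finite_subset[OF A] finite_subset[OF B] card_Un_Int[of A "(\<lambda>x. (x + e) mod p) ` B"]
      card_image_add_mod[OF B] by auto
  ultimately show ?thesis by simp
qed

text \<open>Induction on \<open>card B\<close>: with \<open>b\<^sub>1 \<noteq> b\<^sub>2\<close> in B and \<open>a \<in> A\<close> such that \<open>a + (b\<^sub>2 - b\<^sub>1) \<notin> A\<close>, the
  e-transform with \<open>e = a - b\<^sub>1\<close> keeps \<open>b\<^sub>1\<close> but removes \<open>b\<^sub>2\<close> from B.\<close>
theorem cauchy_davenport:
  assumes p: "prime p"
  shows "\<lbrakk>A \<subseteq> {..<p}; B \<subseteq> {..<p}; A \<noteq> {}; B \<noteq> {}\<rbrakk> \<Longrightarrow>
     min p (card A + card B - 1) \<le> card (sumset_mod p A B)"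
proof (induction "card B" arbitrary: A B rule: less_induct)
  case less
  have p0: "p > 0" using p prime_gt_0_nat by blast
  have finB: "finite B" using less finite_subset by blast
  show ?case
  proof (cases "card B \<le> 1 \<or> A = {..<p}")
    case True
    obtain b where "b \<in> B" using less by auto
    then have "card A \<le> card (sumset_mod p A B)" using card_le_card_sumset_mod[OF less(2) _ p0] by blast
    moreover have "card B \<noteq> 0" using less finB by simp
    then have "card B = 1 \<or> card A = p" using True by auto
    ultimately show ?thesis by auto
  next
    case False
    then obtain b1 b2 where b: "b1 \<in> B" "b2 \<in> B" "b1 \<noteq> b2"
      using card_le_Suc0_iff_eq[OF finB] by auto
    have b1p: "b1 < p" and b2p: "b2 < p" using b less by auto
    define d where "d = (b2 + p - b1) mod p"
    have "d \<noteq> 0"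
    proof (cases "b1 < b2")
      case True
      then have "d = (b2 - b1) mod p" unfolding d_def
        by (metis Nat.add_diff_assoc2 less_imp_le mod_add_self2)
      then show ?thesis using True b2p by simp
    next
      case False
      then have "b2 + p - b1 < p" "b2 + p - b1 > 0" using b b1p by auto
      then show ?thesis unfolding d_def by simp
    qed
    moreover have "d < p" using p0 unfolding d_def by simp
    ultimately have "\<not> (\<forall>x\<in>A. (x + d) mod p \<in> A)"
      using add_mod_closed_imp_all[OF p _ _ less(2)] False less(4) by blast
    then obtain a where a: "a \<in> A" "(a + d) mod p \<notin> A" by blast
    define e where "e = (a + p - b1) mod p"
    have shift: "(y + e) mod p = (y + a + p - b1) mod p" for y
    proof -
      have "y + (a + p - b1) = y + a + p - b1" using b1p by simp
      then show ?thesis unfolding e_def by (simp only: mod_add_right_eq)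
    qed
    have "(b1 + e) mod p = a" using shift[of b1] b1p a less(2) by auto
    moreover have "(b2 + e) mod p = (a + d) mod p"
      using shift[of b2] b1p unfolding d_def by (simp add: mod_add_right_eq add.commute add.left_commute)
    ultimately have b1_in: "b1 \<in> {y \<in> B. (y + e) mod p \<in> A}"
      and b2_notin: "b2 \<notin> {y \<in> B. (y + e) mod p \<in> A}" using a b by auto
    then have "card {y \<in> B. (y + e) mod p \<in> A} < card B"
      using b finB by (intro psubset_card_mono) auto
    moreover have "A \<union> (\<lambda>x. (x + e) mod p) ` B \<subseteq> {..<p}" using less(2) p0 by auto
    moreover have "{y \<in> B. (y + e) mod p \<in> A} \<subseteq> {..<p}" using less(3) by auto
    ultimately have "min p (card (A \<union> (\<lambda>x. (x + e) mod p) ` B) + card {y \<in> B. (y + e) mod p \<in> A} - 1)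
        \<le> card (sumset_mod p (A \<union> (\<lambda>x. (x + e) mod p) ` B) {y \<in> B. (y + e) mod p \<in> A})"
      using less(1) less(4) b1_in by blast
    also have "\<dots> \<le> card (sumset_mod p A B)"
      using sumset_mod_e_transform_subset finite_subset[OF sumset_mod_subset[OF p0]] by (rule card_mono[rotated]) simp
    finally show ?thesis unfolding card_e_transform[OF less(2,3)] .
  qed
qed

fun iterated_sumset :: "nat \<Rightarrow> nat set \<Rightarrow> nat \<Rightarrow> nat set" where
  "iterated_sumset p A 0 = {0}"
| "iterated_sumset p A (Suc k) = sumset_mod p (iterated_sumset p A k) A"

lemma iterated_sumset_subset: "p > 0 \<Longrightarrow> iterated_sumset p A k \<subseteq> {..<p}"
  by (cases k) (auto simp: sumset_mod_subset)

lemma iterated_sumset_nonempty: "A \<noteq> {} \<Longrightarrow> iterated_sumset p A k \<noteq> {}"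
  by (induction k) (auto simp: sumset_mod_def)

lemma card_iterated_sumset_ge:
  assumes p: "prime p" and A: "A \<subseteq> {..<p}" "A \<noteq> {}"
  shows "min p (k * card A - k + 1) \<le> card (iterated_sumset p A k)"
proof (induction k)
  case 0 then show ?case by simp
next
  case (Suc k)
  have p0: "p > 0" using p prime_gt_0_nat by blast
  have cA: "card A \<ge> 1" using A finite_subset[OF A(1)] by (simp add: Suc_leI card_gt_0_iff)
  have cd: "min p (card (iterated_sumset p A k) + card A - 1) \<le> card (iterated_sumset p A (Suc k))"
    using cauchy_davenport[OF p iterated_sumset_subset[OF p0] A(1) iterated_sumset_nonempty[OF A(2)] A(2)]
    by simp
  show ?case
  proof (cases "p \<le> k * card A - k + 1")
    case True
    then have "p \<le> card (iterated_sumset p A k)" using Suc.IH by simp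
    then show ?thesis using cd cA by simp
  next
    case False
    then have "k * card A - k + 1 \<le> card (iterated_sumset p A k)" using Suc.IH by simp
    then have "Suc k * card A - Suc k + 1 \<le> card (iterated_sumset p A k) + card A - 1"
      using cA by (simp add: algebra_simps)
    then show ?thesis using cd by simp
  qed
qed

section \<open>Additive characters\<close>

definition e2pi :: "real \<Rightarrow> complex" where
  "e2pi x = cis (2 * pi * x)"

lemma e2pi_add: "e2pi (x + y) = e2pi x * e2pi y"
  by (simp add: e2pi_def distrib_left cis_mult)

lemma norm_e2pi [simp]: "norm (e2pi x) = 1"
  by (simp add: e2pi_def)

lemma e2pi_of_int [simp]: "e2pi (of_int k) = 1"
  by (simp add: e2pi_def)

lemma e2pi_0 [simp]: "e2pi 0 = 1"
  by (simp add: e2pi_def)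

lemma e2pi_eq_1_imp_Ints: "e2pi x = 1 \<Longrightarrow> x \<in> \<int>"
proof -
  assume "e2pi x = 1"
  then have "cos (2 * pi * x) = 1" unfolding e2pi_def by (metis cis.sel(1) one_complex.sel(1))
  then obtain k :: int where "2 * pi * x = of_int k * 2 * pi" using cos_one_2pi_int by blast
  then show "x \<in> \<int>" by simp
qed

lemma e2pi_sum: "e2pi (\<Sum>i\<in>S. f i) = (\<Prod>i\<in>S. e2pi (f i))"
  by (induction S rule: infinite_finite_induct) (auto simp: e2pi_add)

lemma e2pi_power: "e2pi x ^ t = e2pi (real t * x)"
  by (induction t) (auto simp: e2pi_add distrib_right)

lemma cnj_e2pi: "cnj (e2pi x) = e2pi (- x)"
  by (simp add: e2pi_def cis_cnj)

lemma sum_e2pi_multiples: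
  fixes d :: int and p :: nat
  assumes p: "p > 0"
  shows "(\<Sum>t<p. e2pi (of_int d * real t / real p)) = (if int p dvd d then of_nat p else 0)"
proof -
  define w where "w = e2pi (of_int d / real p)"
  have powers: "e2pi (of_int d * real t / real p) = w ^ t" for t
    unfolding w_def e2pi_power by (simp add: field_simps)
  show ?thesis
  proof (cases "int p dvd d")
    case True
    then obtain k where "d = int p * k" by (elim dvdE)
    then have "w = 1" unfolding w_def using p by simp
    then show ?thesis using True by (simp add: powers)
  next
    case False
    have "w \<noteq> 1"
    proof
      assume "w = 1"
      then obtain k :: int where "of_int d / real p = of_int k"
        unfolding w_def by (metis e2pi_eq_1_imp_Ints Ints_cases)
      then have "d = int p * k" using p by (simp add: field_simps) (metis of_int_eq_iff of_int_mult of_int_of_nat_eq)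
      then show False using False by simp
    qed
    moreover have "w ^ p = 1" unfolding w_def e2pi_power using p by simp
    ultimately have "(\<Sum>t<p. w ^ t) = 0" by (simp add: sum_gp_strict)
    then show ?thesis using False by (simp add: powers)
  qed
qed

lemma int_dvd_abs_less_imp_zero: "int p dvd x \<Longrightarrow> \<bar>x\<bar> < int p \<Longrightarrow> x = 0"
  using dvd_imp_le_int[of x "int p"] by (cases "x = 0") auto

text \<open>With \<open>u = \<bar>1 - z\<bar>\<^sup>2\<close> the parallelogram law gives \<open>(\<bar>1 + z\<bar> / 2)\<^sup>2 = 1 - u / 4 \<le> exp (- u / 4)\<close>.\<close>
lemma norm_one_plus_unit_le_exp:
  fixes z :: complex
  assumes "norm z = 1"
  shows "norm (1 + z) \<le> 2 * exp (- (norm (1 - z))\<^sup>2 / 8)"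
proof -
  have parallelogram: "(norm (1 + z))\<^sup>2 + (norm (1 - z))\<^sup>2 = 4"
  proof -
    have "(norm (1 + z))\<^sup>2 = (1 + Re z)\<^sup>2 + (Im z)\<^sup>2" by (simp add: cmod_power2)
    moreover have "(norm (1 - z))\<^sup>2 = (1 - Re z)\<^sup>2 + (Im z)\<^sup>2" by (simp add: cmod_power2)
    moreover have "(Re z)\<^sup>2 + (Im z)\<^sup>2 = 1" using assms by (simp add: cmod_power2[symmetric])
    ultimately show ?thesis by (simp add: power2_eq_square algebra_simps)
  qed
  define u where "u = (norm (1 - z))\<^sup>2"
  have "(norm (1 + z) / 2)\<^sup>2 = 1 - u / 4" using parallelogram unfolding u_def by (simp add: power_divide)
  also have "\<dots> \<le> exp (- u / 4)" using exp_ge_add_one_self[of "- u / 4"] by simp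
  also have "\<dots> = (exp (- u / 8))\<^sup>2" by (simp add: power2_eq_square exp_add[symmetric])
  finally have "norm (1 + z) / 2 \<le> exp (- u / 8)"
    by (rule power2_le_imp_le) simp
  then show ?thesis unfolding u_def by simp
qed

lemma norm_prod_unit_minus_one_le:
  fixes w :: "nat \<Rightarrow> complex"
  assumes "finite S" "\<And>i. i \<in> S \<Longrightarrow> norm (w i) = 1"
  shows "norm ((\<Prod>i\<in>S. w i) - 1) \<le> (\<Sum>i\<in>S. norm (1 - w i))"
  using assms
proof (induction S rule: finite_induct)
  case empty then show ?case by simp
next
  case (insert j S)
  have "(\<Prod>i\<in>insert j S. w i) - 1 = ((\<Prod>i\<in>S. w i) - 1) * w j + (w j - 1)"
    using insert by (simp add: algebra_simps)
  then have "norm ((\<Prod>i\<in>insert j S. w i) - 1) \<le> norm ((\<Prod>i\<in>S. w i) - 1) * norm (w j) + norm (w j - 1)"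
    by (metis norm_mult norm_triangle_ineq)
  also have "\<dots> = norm ((\<Prod>i\<in>S. w i) - 1) + norm (1 - w j)"
    using insert by (simp add: norm_minus_commute)
  also have "\<dots> \<le> (\<Sum>i\<in>S. norm (1 - w i)) + norm (1 - w j)"
    using insert by simp
  finally show ?case using insert by (simp add: add.commute)
qed

section \<open>Fourier analysis of subset sums modulo a prime\<close>

locale weights_mod_prime =
  fixes p :: nat and b :: "nat \<Rightarrow> int" and n :: nat
  assumes prime: "prime p"
begin

lemma p_pos: "p > 0"
  using prime prime_gt_0_nat by blast

definition zeta :: "nat \<Rightarrow> nat \<Rightarrow> complex" where
  "zeta i t = e2pi (of_int (b i) * real t / real p)"

definition G :: "nat \<Rightarrow> real" where
  "G t = L2_set (\<lambda>i. norm (1 - zeta i t)) {1..n}"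

definition bsum :: "nat set \<Rightarrow> int" where
  "bsum S = (\<Sum>i\<in>S. b i)"

definition sublevel :: "real \<Rightarrow> nat set" where
  "sublevel c = {t. t < p \<and> G t \<le> c}"

lemma norm_zeta [simp]: "norm (zeta i t) = 1"
  by (simp add: zeta_def)

lemma zeta_add_mod: "zeta i ((t1 + t2) mod p) = zeta i t1 * zeta i t2"
proof -
  have "t1 + t2 = p * ((t1 + t2) div p) + (t1 + t2) mod p" by simp
  then have mod_eq: "real ((t1 + t2) mod p) = real t1 + real t2 - real p * real ((t1 + t2) div p)"
    by (metis add_diff_cancel_left' of_nat_add of_nat_mult)
  have "of_int (b i) * real ((t1 + t2) mod p) / real p =
      of_int (b i) * real t1 / real p + of_int (b i) * real t2 / real p + of_int (- b i * int ((t1 + t2) div p))"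
    unfolding mod_eq using p_pos by (simp add: field_simps)
  then show ?thesis unfolding zeta_def by (simp only: e2pi_add e2pi_of_int mult_1_right)
qed

lemma norm_one_minus_zeta_add_mod:
  "norm (1 - zeta i ((t1 + t2) mod p)) \<le> norm (1 - zeta i t1) + norm (1 - zeta i t2)"
proof -
  have "1 - zeta i ((t1 + t2) mod p) = (1 - zeta i t1) + zeta i t1 * (1 - zeta i t2)"
    by (simp add: zeta_add_mod algebra_simps)
  then show ?thesis by (metis norm_triangle_ineq norm_mult norm_zeta mult_1)
qed

lemma G_nonneg: "G t \<ge> 0"
  unfolding G_def by (rule L2_set_nonneg)

lemma G_0: "G 0 = 0"
  unfolding G_def by (simp add: zeta_def L2_set_def)

lemma G_add_mod: "G ((t1 + t2) mod p) \<le> G t1 + G t2"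
proof -
  have "G ((t1 + t2) mod p) \<le> L2_set (\<lambda>i. norm (1 - zeta i t1) + norm (1 - zeta i t2)) {1..n}"
    unfolding G_def by (rule L2_set_mono) (auto simp: norm_one_minus_zeta_add_mod)
  also have "\<dots> \<le> G t1 + G t2" unfolding G_def by (rule L2_set_triangle_ineq)
  finally show ?thesis .
qed

lemma G_squared: "(G t)\<^sup>2 = (\<Sum>i\<in>{1..n}. (norm (1 - zeta i t))\<^sup>2)"
  unfolding G_def L2_set_def by (simp add: sum_nonneg)

lemma G_iterated_sumset_le:
  assumes "\<forall>t\<in>A. G t \<le> c" "c \<ge> 0" "t \<in> iterated_sumset p A k"
  shows "G t \<le> real k * c"
  using assms(3)
proof (induction k arbitrary: t)
  case 0 then show ?case by (simp add: G_0)
next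
  case (Suc k)
  then obtain x y where xy: "x \<in> iterated_sumset p A k" "y \<in> A" "t = (x + y) mod p"
    by (auto simp: sumset_mod_def)
  have "G t \<le> G x + G y" using xy G_add_mod by simp
  also have "\<dots> \<le> real k * c + c" using xy Suc.IH assms by (simp add: add_mono)
  finally show ?case by (simp add: algebra_simps)
qed

lemma prod_zeta: "(\<Prod>i\<in>S. zeta i t) = e2pi (of_int (bsum S) * real t / real p)"
  unfolding zeta_def bsum_def e2pi_sum[symmetric]
  by (simp add: sum_distrib_right sum_divide_distrib)

lemma e2pi_bsum_diff:
  "e2pi (of_int (bsum x) * real t / real p) * e2pi (- (of_int (bsum y) * real t / real p))
     = e2pi (of_int (bsum x - bsum y) * real t / real p)"
  by (simp add: e2pi_add[symmetric] diff_divide_distrib left_diff_distrib)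

text \<open>Fourier inversion; the hypothesis makes \<open>bsum S \<equiv> \<beta> (mod p)\<close> equivalent to \<open>bsum S = \<beta>\<close>.\<close>
lemma fourier_count:
  assumes bnd: "\<forall>S. S \<subseteq> {1..n} \<longrightarrow> \<bar>bsum S - \<beta>\<bar> < int p"
  shows "(\<Sum>t<p. e2pi (- of_int \<beta> * real t / real p) * (\<Prod>i\<in>{1..n}. 1 + zeta i t))
     = of_nat (p * card {S. S \<subseteq> {1..n} \<and> bsum S = \<beta>})"
proof -
  have expand: "(\<Prod>i\<in>{1..n}. 1 + zeta i t) = (\<Sum>S\<in>Pow {1..n}. e2pi (of_int (bsum S) * real t / real p))" for t
  proof -
    have "(\<Prod>i\<in>{1..n}. 1 + zeta i t) = (\<Prod>i\<in>{1..n}. zeta i t + 1)" by (simp add: add.commute)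
    also have "\<dots> = (\<Sum>S\<in>Pow {1..n}. (\<Prod>i\<in>S. zeta i t) * (\<Prod>i\<in>{1..n}-S. 1))"
      by (rule prod_add) simp
    finally show ?thesis by (simp add: prod_zeta)
  qed
  have shift: "e2pi (- of_int \<beta> * real t / real p) * e2pi (of_int (bsum S) * real t / real p)
      = e2pi (of_int (bsum S - \<beta>) * real t / real p)" for t S
  proof -
    have "- of_int \<beta> * real t / real p + of_int (bsum S) * real t / real p
        = of_int (bsum S - \<beta>) * real t / real p" using p_pos by (simp add: field_simps)
    then show ?thesis by (simp only: e2pi_add[symmetric])
  qed
  have "(\<Sum>t<p. e2pi (- of_int \<beta> * real t / real p) * (\<Prod>i\<in>{1..n}. 1 + zeta i t))
      = (\<Sum>S\<in>Pow {1..n}. \<Sum>t<p. e2pi (of_int (bsum S - \<beta>) * real t / real p))"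
    by (simp only: expand sum_distrib_left shift sum.swap[of _ "{..<p}"])
  also have "\<dots> = (\<Sum>S\<in>Pow {1..n}. if bsum S = \<beta> then of_nat p else 0)"
  proof (rule sum.cong[OF refl])
    fix S assume "S \<in> Pow {1..n}"
    then have small: "\<bar>bsum S - \<beta>\<bar> < int p" using bnd by auto
    then have "int p dvd (bsum S - \<beta>) \<longleftrightarrow> bsum S = \<beta>"
      using int_dvd_abs_less_imp_zero[OF _ small] by auto
    then show "(\<Sum>t<p. e2pi (of_int (bsum S - \<beta>) * real t / real p)) = (if bsum S = \<beta> then of_nat p else 0)"
      using sum_e2pi_multiples[OF p_pos, of "bsum S - \<beta>"] by simp
  qed
  also have "\<dots> = of_nat (p * card {S. S \<subseteq> {1..n} \<and> bsum S = \<beta>})"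
    by (simp add: sum.If_cases Int_def conj_commute)
  finally show ?thesis .
qed

lemma card_fiber_le_sum_exp:
  assumes bnd: "\<forall>S. S \<subseteq> {1..n} \<longrightarrow> \<bar>bsum S - \<beta>\<bar> < int p"
  shows "real (card {S. S \<subseteq> {1..n} \<and> bsum S = \<beta>}) / 2 ^ n \<le> (\<Sum>t<p. exp (- (G t)\<^sup>2 / 8)) / real p"
proof -
  let ?c = "card {S. S \<subseteq> {1..n} \<and> bsum S = \<beta>}"
  have "real (p * ?c) = norm (\<Sum>t<p. e2pi (- of_int \<beta> * real t / real p) * (\<Prod>i\<in>{1..n}. 1 + zeta i t))"
    unfolding fourier_count[OF bnd] by (simp only: norm_of_nat)
  also have "\<dots> \<le> (\<Sum>t<p. \<Prod>i\<in>{1..n}. norm (1 + zeta i t))"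
    by (rule order_trans[OF norm_sum]) (simp add: norm_mult prod_norm)
  also have "\<dots> \<le> (\<Sum>t<p. \<Prod>i\<in>{1..n}. 2 * exp (- (norm (1 - zeta i t))\<^sup>2 / 8))"
    using norm_one_plus_unit_le_exp[OF norm_zeta] by (intro sum_mono prod_mono conjI) auto
  also have "\<dots> = (\<Sum>t<p. 2 ^ n * exp (- (G t)\<^sup>2 / 8))"
    by (simp add: prod.distrib exp_sum[symmetric] G_squared sum_divide_distrib sum_negf)
  finally have "real p * real ?c \<le> 2 ^ n * (\<Sum>t<p. exp (- (G t)\<^sup>2 / 8))"
    by (simp add: sum_distrib_left)
  then show ?thesis using p_pos by (simp add: field_simps)
qed

end

section \<open>The second moment of r-subset sums\<close>

definition r_subsets :: "nat \<Rightarrow> nat \<Rightarrow> nat set set" where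
  "r_subsets n r = {x. x \<subseteq> {1..n} \<and> card x = r}"

lemma finite_r_subsets: "finite (r_subsets n r)"
  by (rule finite_subset[of _ "Pow {1..n}"]) (auto simp: r_subsets_def)

lemma card_r_subsets: "card (r_subsets n r) = n choose r"
  unfolding r_subsets_def using n_subsets[of "{1..n}" r] by simp

lemma card_r_subsets_containing:
  assumes i: "i \<in> {1..n}" and r: "r \<ge> 1"
  shows "card {x \<in> r_subsets n r. i \<in> x} = (n - 1) choose (r - 1)"
proof -
  let ?Y = "{y. y \<subseteq> {1..n} - {i} \<and> card y = r - 1}"
  have "{x \<in> r_subsets n r. i \<in> x} = insert i ` ?Y"
  proof (intro equalityI subsetI)
    fix x assume "x \<in> {x \<in> r_subsets n r. i \<in> x}"
    then have x: "x \<subseteq> {1..n}" "card x = r" "i \<in> x" unfolding r_subsets_def by auto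
    then have "x - {i} \<in> ?Y" using finite_subset[OF x(1)] by auto
    moreover have "x = insert i (x - {i})" using x by auto
    ultimately show "x \<in> insert i ` ?Y" by blast
  next
    fix x assume "x \<in> insert i ` ?Y"
    then obtain y where y: "y \<subseteq> {1..n} - {i}" "card y = r - 1" "x = insert i y" by auto
    moreover have "i \<notin> y" using y(1) by auto
    ultimately have "card x = r" using finite_subset[OF y(1)] r by simp
    then show "x \<in> {x \<in> r_subsets n r. i \<in> x}" using y i unfolding r_subsets_def by auto
  qed
  moreover have "inj_on (insert i) ?Y"
    by (rule inj_onI) (metis Diff_iff insert_absorb insert_ident mem_Collect_eq subset_iff singletonI)
  ultimately have "card {x \<in> r_subsets n r. i \<in> x} = card ?Y" by (simp add: card_image)
  also have "\<dots> = card ({1..n} - {i}) choose (r - 1)" by (rule n_subsets) simp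
  finally show ?thesis using i by simp
qed

text \<open>Double counting: every \<open>i \<in> [n]\<close> lies in \<open>binom (n-1) (r-1)\<close> of the r-subsets.\<close>
lemma sum_r_subsets_sum:
  fixes h :: "nat \<Rightarrow> real"
  assumes r: "r \<ge> 1"
  shows "(\<Sum>x\<in>r_subsets n r. \<Sum>i\<in>x. h i) = real ((n - 1) choose (r - 1)) * (\<Sum>i\<in>{1..n}. h i)"
proof -
  have "(\<Sum>x\<in>r_subsets n r. \<Sum>i\<in>x. h i) = (\<Sum>x\<in>r_subsets n r. \<Sum>i\<in>{1..n}. if i \<in> x then h i else 0)"
  proof (rule sum.cong[OF refl])
    fix x assume "x \<in> r_subsets n r"
    then have "{i \<in> {1..n}. i \<in> x} = x" unfolding r_subsets_def by auto
    then show "(\<Sum>i\<in>x. h i) = (\<Sum>i\<in>{1..n}. if i \<in> x then h i else 0)"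
      using sum.inter_filter[of "{1..n}" h "\<lambda>i. i \<in> x"] by simp
  qed
  also have "\<dots> = (\<Sum>i\<in>{1..n}. \<Sum>x\<in>r_subsets n r. if i \<in> x then h i else 0)"
    by (rule sum.swap)
  also have "\<dots> = (\<Sum>i\<in>{1..n}. h i * real ((n - 1) choose (r - 1)))"
  proof (rule sum.cong[OF refl])
    fix i assume i: "i \<in> {1..n}"
    have "(\<Sum>x\<in>r_subsets n r. if i \<in> x then h i else 0) = (\<Sum>x\<in>{x \<in> r_subsets n r. i \<in> x}. h i)"
      using sum.inter_filter[OF finite_r_subsets, where g="\<lambda>_. h i" and P="\<lambda>x. i \<in> x"] by simp
    then show "(\<Sum>x\<in>r_subsets n r. if i \<in> x then h i else 0) = h i * real ((n - 1) choose (r - 1))"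
      using card_r_subsets_containing[OF i r] by simp
  qed
  finally show ?thesis by (simp add: sum_distrib_right mult.commute)
qed

context weights_mod_prime
begin

definition W :: "nat \<Rightarrow> nat \<Rightarrow> complex" where
  "W r t = (\<Sum>x\<in>r_subsets n r. \<Prod>i\<in>x. zeta i t)"

text \<open>Parseval: distinct r-subset sums that are pairwise incongruent modulo p make the
  characters \<open>t \<mapsto> e(\<sigma>(x) t / p)\<close> orthogonal.\<close>
lemma sum_norm_W_squared:
  assumes distinct: "\<forall>x\<in>r_subsets n r. \<forall>y\<in>r_subsets n r. bsum x = bsum y \<longrightarrow> x = y"
    and small: "\<forall>x\<in>r_subsets n r. \<forall>y\<in>r_subsets n r. \<bar>bsum x - bsum y\<bar> < int p"
  shows "(\<Sum>t<p. (norm (W r t))\<^sup>2) = real p * real (n choose r)"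
proof -
  have square: "complex_of_real ((norm (W r t))\<^sup>2)
      = (\<Sum>x\<in>r_subsets n r. \<Sum>y\<in>r_subsets n r. e2pi (of_int (bsum x - bsum y) * real t / real p))" for t
  proof -
    have "complex_of_real ((norm (W r t))\<^sup>2) = W r t * cnj (W r t)" by (rule complex_norm_square)
    also have "\<dots> = (\<Sum>x\<in>r_subsets n r. e2pi (of_int (bsum x) * real t / real p)) *
                     (\<Sum>y\<in>r_subsets n r. e2pi (- (of_int (bsum y) * real t / real p)))"
      unfolding W_def by (simp add: prod_zeta cnj_e2pi)
    finally show ?thesis by (simp only: sum_product e2pi_bsum_diff)
  qed
  have "complex_of_real (\<Sum>t<p. (norm (W r t))\<^sup>2)
      = (\<Sum>x\<in>r_subsets n r. \<Sum>y\<in>r_subsets n r. \<Sum>t<p. e2pi (of_int (bsum x - bsum y) * real t / real p))"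
    by (simp only: of_real_sum square sum.swap[of _ "{..<p}"])
  also have "\<dots> = (\<Sum>x\<in>r_subsets n r. \<Sum>y\<in>r_subsets n r. if x = y then of_nat p else 0)"
  proof (intro sum.cong refl)
    fix x y assume xy: "x \<in> r_subsets n r" "y \<in> r_subsets n r"
    have "int p dvd (bsum x - bsum y) \<longleftrightarrow> x = y"
      using int_dvd_abs_less_imp_zero[where x="bsum x - bsum y" and p=p] small distinct xy by auto
    then show "(\<Sum>t<p. e2pi (of_int (bsum x - bsum y) * real t / real p)) = (if x = y then of_nat p else 0)"
      using sum_e2pi_multiples[OF p_pos, of "bsum x - bsum y"] by simp
  qed
  also have "\<dots> = complex_of_real (real p * real (n choose r))"
    by (simp add: finite_r_subsets card_r_subsets)
  finally show ?thesis by (simp only: of_real_eq_iff)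
qed

text \<open>Each term of W is within \<open>\<Sum>\<^sub>i\<^sub>\<in>\<^sub>x \<bar>1 - \<zeta>\<^sub>i\<bar>\<close> of 1; double counting and Cauchy-Schwarz bound the
  total deviation by \<open>binom (n-1) (r-1) \<surd>n G(t) = binom n r \<cdot> r G(t) / \<surd>n\<close>.\<close>
lemma norm_W_ge:
  assumes r: "1 \<le> r" "r \<le> n"
  shows "norm (W r t) \<ge> real (n choose r) * (1 - real r * G t / sqrt (real n))"
proof -
  define h where "h i = norm (1 - zeta i t)" for i
  have n0: "n > 0" using r by simp
  have "norm (W r t - of_nat (n choose r)) = norm (\<Sum>x\<in>r_subsets n r. (\<Prod>i\<in>x. zeta i t) - 1)"
    unfolding W_def by (simp add: sum_subtractf card_r_subsets)
  also have "\<dots> \<le> (\<Sum>x\<in>r_subsets n r. \<Sum>i\<in>x. h i)"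
  proof (rule order_trans[OF norm_sum sum_mono])
    fix x assume "x \<in> r_subsets n r"
    then have "finite x" unfolding r_subsets_def using finite_subset by blast
    then show "norm ((\<Prod>i\<in>x. zeta i t) - 1) \<le> (\<Sum>i\<in>x. h i)"
      unfolding h_def by (rule norm_prod_unit_minus_one_le) simp
  qed
  also have "\<dots> = real ((n - 1) choose (r - 1)) * (\<Sum>i\<in>{1..n}. h i)"
    by (rule sum_r_subsets_sum[OF r(1)])
  also have "\<dots> \<le> real ((n - 1) choose (r - 1)) * (G t * sqrt (real n))"
    using L2_set_mult_ineq[of "\<lambda>i. norm (1 - zeta i t)" "\<lambda>_. 1" "{1..n}"]
    by (intro mult_left_mono) (simp_all add: h_def G_def L2_set_constant)
  also have "\<dots> = real (n choose r) * (real r * G t / sqrt (real n))"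
  proof -
    have "r * (n choose r) = n * ((n - 1) choose (r - 1))"
      using times_binomial_minus1_eq[of r n] r by simp
    then have binom: "real ((n - 1) choose (r - 1)) = real r * real (n choose r) / real n"
      using n0 by (simp add: field_simps) (metis of_nat_mult)
    have "sqrt (real n) * sqrt (real n) = real n" by simp
    then show ?thesis unfolding binom using n0 by (simp add: field_simps)
  qed
  finally have "norm (W r t - of_nat (n choose r)) \<le> real (n choose r) * (real r * G t / sqrt (real n))" .
  moreover have "norm (of_nat (n choose r) :: complex) - norm (W r t) \<le> norm (W r t - of_nat (n choose r))"
    by (metis norm_minus_commute norm_triangle_ineq2)
  ultimately show ?thesis by (simp add: algebra_simps)
qed

text \<open>On \<open>sublevel c\<^sub>0\<close> the bound above gives \<open>\<bar>W\<bar> \<ge> binom n r / 2\<close>; compare with the second moment.\<close>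
lemma card_sublevel_le:
  assumes distinct: "\<forall>x\<in>r_subsets n r. \<forall>y\<in>r_subsets n r. bsum x = bsum y \<longrightarrow> x = y"
    and small: "\<forall>x\<in>r_subsets n r. \<forall>y\<in>r_subsets n r. \<bar>bsum x - bsum y\<bar> < int p"
    and r: "1 \<le> r" "r \<le> n"
  shows "real (card (sublevel (sqrt (real n) / (2 * real r)))) * real (n choose r) \<le> 4 * real p"
proof -
  define c0 where "c0 = sqrt (real n) / (2 * real r)"
  define C where "C = real (n choose r)"
  have C_pos: "C > 0" unfolding C_def using r by simp
  have lower: "(C / 2)\<^sup>2 \<le> (norm (W r t))\<^sup>2" if "t \<in> sublevel c0" for t
  proof -
    have "real r * G t \<le> real r * c0" using that r unfolding sublevel_def by simp
    then have "real r * G t / sqrt (real n) \<le> 1 / 2"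
      using r unfolding c0_def by (simp add: field_simps)
    then have "C * (1 / 2) \<le> C * (1 - real r * G t / sqrt (real n))"
      using C_pos by (intro mult_left_mono) auto
    also have "\<dots> \<le> norm (W r t)" using norm_W_ge[OF r] unfolding C_def by simp
    finally show ?thesis using C_pos by (simp add: power_mono)
  qed
  have "real (card (sublevel c0)) * (C / 2)\<^sup>2 = (\<Sum>t\<in>sublevel c0. (C / 2)\<^sup>2)" by simp
  also have "\<dots> \<le> (\<Sum>t\<in>sublevel c0. (norm (W r t))\<^sup>2)" by (rule sum_mono) (rule lower)
  also have "\<dots> \<le> (\<Sum>t<p. (norm (W r t))\<^sup>2)" by (rule sum_mono2) (auto simp: sublevel_def)
  also have "\<dots> = real p * C" unfolding C_def by (rule sum_norm_W_squared[OF distinct small])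
  finally have "real (card (sublevel c0)) * C * C \<le> 4 * real p * C"
    by (simp add: power2_eq_square algebra_simps)
  then show ?thesis using C_pos unfolding c0_def C_def by simp
qed

end

section \<open>Summing over level sets\<close>

lemma real_nat_floor_bounds:
  fixes x :: real
  assumes "x \<ge> 1"
  shows "x / 2 \<le> real (nat \<lfloor>x\<rfloor>)" "real (nat \<lfloor>x\<rfloor>) \<le> x"
proof -
  have "\<lfloor>x\<rfloor> \<ge> 1" using assms by linarith
  then have floor_eq: "real (nat \<lfloor>x\<rfloor>) = real_of_int \<lfloor>x\<rfloor>" by simp
  show "real (nat \<lfloor>x\<rfloor>) \<le> x" using floor_eq by simp
  have "real_of_int \<lfloor>x\<rfloor> > x - 1" by linarith
  then show "x / 2 \<le> real (nat \<lfloor>x\<rfloor>)"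
    using floor_eq \<open>\<lfloor>x\<rfloor> \<ge> 1\<close> by (cases "x \<ge> 2") linarith+
qed

lemma exp_neg_le_layers:
  fixes s :: real
  assumes "s \<ge> 0"
  shows "exp (- s) \<le> (\<Sum>l<L. exp (- real l) * (if s \<le> real l + 1 then 1 else 0)) + exp (- real L)"
proof (cases "s \<ge> real L")
  case True
  then have "exp (- s) \<le> exp (- real L)" by simp
  moreover have "(\<Sum>l<L. exp (- real l) * (if s \<le> real l + 1 then 1 else 0)) \<ge> 0"
    by (rule sum_nonneg) simp
  ultimately show ?thesis by linarith
next
  case False
  define l0 where "l0 = nat \<lfloor>s\<rfloor>"
  have l0s: "real l0 \<le> s" "s \<le> real l0 + 1" using assms unfolding l0_def by linarith+
  have "exp (- s) \<le> exp (- real l0) * (if s \<le> real l0 + 1 then 1 else 0)" using l0s by simp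
  also have "\<dots> \<le> (\<Sum>l<L. exp (- real l) * (if s \<le> real l + 1 then 1 else 0))"
    by (rule member_le_sum) (use False l0s in auto)
  finally show ?thesis using exp_gt_zero[of "- real L"] by linarith
qed

lemma exp_neg_le_half_power: "exp (- real l) \<le> (1/2::real) ^ l"
proof -
  have "exp (- real l) = exp (- 1) ^ l" by (simp add: exp_of_nat_mult[symmetric])
  also have "\<dots> \<le> (1/2) ^ l"
  proof (rule power_mono)
    have "2 \<le> exp (1::real)" using exp_ge_add_one_self[of 1] by simp
    then show "exp (- 1) \<le> (1/2::real)" by (simp add: exp_minus field_simps)
  qed simp
  finally show ?thesis .
qed

lemma sum_half_powers: "(\<Sum>l<L. (1/2::real) ^ l) = 2 - 2 / 2 ^ L"
  by (induction L) (auto simp: field_simps)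

lemma sum_linear_half_powers: "(\<Sum>l<L. (real l + 1) * (1/2::real) ^ l) = 4 - (2 * real L + 4) / 2 ^ L"
proof (induction L)
  case 0 then show ?case by simp
next
  case (Suc L)
  have "(\<Sum>l<Suc L. (real l + 1) * (1/2::real) ^ l) = 4 - (2 * real L + 4) / 2 ^ L + (real L + 1) / 2 ^ L"
    using Suc by (simp add: power_divide)
  also have "\<dots> = 4 - (2 * real L + 6) / (2 * 2 ^ L)"
    by (simp add: field_simps)
  finally show ?case by (simp add: algebra_simps)
qed

text \<open>Layer-cake decomposition of \<open>exp (- g t)\<close> over the levels \<open>l < L\<close>, using \<open>exp (- l) \<le> 2\<^sup>-\<^sup>l\<close>.\<close>
lemma sum_exp_neg_le_levels:
  fixes g :: "nat \<Rightarrow> real"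
  assumes g_nonneg: "\<And>t. g t \<ge> 0" and A: "A \<ge> 0"
    and levels: "\<And>l. l < L \<Longrightarrow> real (card {t \<in> {..<p}. g t \<le> real l + 1}) \<le> A * (real l + 1) + 1"
  shows "(\<Sum>t<p. exp (- g t)) \<le> A * 4 + 2 + real p * exp (- real L)"
proof -
  have "(\<Sum>t<p. exp (- g t))
      \<le> (\<Sum>t<p. (\<Sum>l<L. exp (- real l) * (if g t \<le> real l + 1 then 1 else 0)) + exp (- real L))"
    using exp_neg_le_layers[OF g_nonneg] by (rule sum_mono)
  also have "\<dots> = (\<Sum>l<L. exp (- real l) * real (card {t \<in> {..<p}. g t \<le> real l + 1}))
      + real p * exp (- real L)"
  proof -
    have "(\<Sum>t<p. exp (- real l) * (if g t \<le> real l + 1 then 1 else 0))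
        = exp (- real l) * real (card {t \<in> {..<p}. g t \<le> real l + 1})" for l
      using sum.inter_filter[of "{..<p}" "\<lambda>_. (1::real)" "\<lambda>t. g t \<le> real l + 1"]
      by (simp add: sum_distrib_left[symmetric])
    moreover have "(\<Sum>t<p. \<Sum>l<L. exp (- real l) * (if g t \<le> real l + 1 then 1 else 0))
        = (\<Sum>l<L. \<Sum>t<p. exp (- real l) * (if g t \<le> real l + 1 then 1 else 0))"
      by (rule sum.swap)
    ultimately show ?thesis by (simp add: sum.distrib)
  qed
  also have "\<dots> \<le> (\<Sum>l<L. A * ((real l + 1) * (1/2) ^ l) + (1/2) ^ l) + real p * exp (- real L)"
  proof -
    have "exp (- real l) * real (card {t \<in> {..<p}. g t \<le> real l + 1}) \<le> (1/2) ^ l * (A * (real l + 1) + 1)"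
      if "l < L" for l
      by (rule mult_mono[OF exp_neg_le_half_power levels[OF that]]) (use A in auto)
    then show ?thesis by (intro add_mono sum_mono) (auto simp: algebra_simps)
  qed
  also have "\<dots> = A * (\<Sum>l<L. (real l + 1) * (1/2) ^ l) + (\<Sum>l<L. (1/2) ^ l) + real p * exp (- real L)"
    by (simp add: sum.distrib sum_distrib_left)
  also have "\<dots> \<le> A * 4 + 2 + real p * exp (- real L)"
    using A unfolding sum_half_powers sum_linear_half_powers
    by (intro add_mono mult_left_mono) auto
  finally show ?thesis .
qed

context weights_mod_prime
begin

text \<open>With \<open>k = \<lfloor>c\<^sub>0 / c\<rfloor>\<close>, the k-fold sumset of \<open>sublevel c\<close> lies in \<open>sublevel c\<^sub>0\<close> by subadditivity
  of G, so Cauchy-Davenport bounds \<open>k (\<bar>sublevel c\<bar> - 1)\<close> by \<open>\<bar>sublevel c\<^sub>0\<bar>\<close>.\<close>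
lemma card_sublevel_le_linear:
  assumes K: "real (card (sublevel c0)) \<le> K" "K < real p" and c: "0 < c" "c \<le> c0"
  shows "real (card (sublevel c)) \<le> 2 * K * c / c0 + 1"
proof -
  define k where "k = nat \<lfloor>c0 / c\<rfloor>"
  have "c0 / c \<ge> 1" using c by simp
  then have k_lower: "real k \<ge> c0 / c / 2" and k_upper: "real k \<le> c0 / c"
    using real_nat_floor_bounds unfolding k_def by blast+
  define A where "A = sublevel c"
  have A0: "0 \<in> A" unfolding A_def sublevel_def using p_pos c by (simp add: G_0)
  have A_sub: "A \<subseteq> {..<p}" unfolding A_def sublevel_def by auto
  have sumset_sub: "iterated_sumset p A k \<subseteq> sublevel c0"
  proof
    fix t assume t: "t \<in> iterated_sumset p A k"
    have "G t \<le> real k * c" using G_iterated_sumset_le[OF _ _ t] c unfolding A_def sublevel_def by auto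
    also have "\<dots> \<le> c0" using k_upper c by (simp add: pos_le_divide_eq)
    finally show "t \<in> sublevel c0" using t iterated_sumset_subset[OF p_pos] unfolding sublevel_def by auto
  qed
  have "card (iterated_sumset p A k) \<le> card (sublevel c0)"
    by (rule card_mono[OF _ sumset_sub]) (auto intro: finite_subset[of _ "{..<p}"] simp: sublevel_def)
  then have sumset_K: "real (card (iterated_sumset p A k)) \<le> K" using K by linarith
  have cA: "card A \<ge> 1" using A0 A_sub finite_subset[OF A_sub]
    by (metis One_nat_def Suc_leI card_gt_0_iff empty_iff finite_lessThan)
  have "min p (k * card A - k + 1) \<le> card (iterated_sumset p A k)"
    by (rule card_iterated_sumset_ge[OF prime A_sub]) (use A0 in auto)
  then have "k * card A - k + 1 \<le> card (iterated_sumset p A k)"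
    using sumset_K K by (cases "p \<le> k * card A - k + 1") auto
  moreover have "real (k * card A - k + 1) = real k * (real (card A) - 1) + 1"
    using cA by (simp add: algebra_simps)
  ultimately have "real k * (real (card A) - 1) + 1 \<le> K" using sumset_K
    by (metis of_nat_le_iff order_trans)
  then have "real k * (real (card A) - 1) \<le> K" by simp
  moreover have "c0 / c / 2 * (real (card A) - 1) \<le> real k * (real (card A) - 1)"
    by (rule mult_right_mono[OF k_lower]) (use cA in simp)
  ultimately have "c0 / c / 2 * (real (card A) - 1) \<le> K" by linarith
  then show ?thesis unfolding A_def using c by (simp add: field_simps)
qed

lemma card_G_level_le:
  assumes K: "real (card (sublevel c0)) \<le> K" "K < real p" "K \<ge> 0"
    and l: "8 * (real l + 1) \<le> c0\<^sup>2" "c0 > 0"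
  shows "real (card {t \<in> {..<p}. (G t)\<^sup>2 / 8 \<le> real l + 1}) \<le> 6 * K / c0 * (real l + 1) + 1"
proof -
  define c where "c = sqrt (8 * (real l + 1))"
  have c_le: "c \<le> c0" unfolding c_def using l by (simp add: real_le_lsqrt)
  have "(G t)\<^sup>2 / 8 \<le> real l + 1 \<longleftrightarrow> G t \<le> c" for t
  proof -
    have "(G t)\<^sup>2 / 8 \<le> real l + 1 \<longleftrightarrow> sqrt ((G t)\<^sup>2) \<le> c"
      unfolding c_def real_sqrt_le_iff by auto
    then show ?thesis using G_nonneg[of t] by simp
  qed
  then have level_eq: "{t \<in> {..<p}. (G t)\<^sup>2 / 8 \<le> real l + 1} = sublevel c"
    unfolding sublevel_def by auto
  have "real (card (sublevel c)) \<le> 2 * K * c / c0 + 1"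
    by (rule card_sublevel_le_linear[OF K(1,2) _ c_le]) (simp add: c_def)
  also have "\<dots> \<le> 2 * K * (3 * (real l + 1)) / c0 + 1"
  proof -
    have "c \<le> 3 * (real l + 1)" unfolding c_def
      by (rule real_le_lsqrt) (auto simp: power2_eq_square algebra_simps)
    then show ?thesis using K(3) l(2) by (simp add: divide_right_mono mult_left_mono)
  qed
  finally show ?thesis unfolding level_eq by (simp add: algebra_simps)
qed

end

context weights_mod_prime
begin

lemma card_fiber_le:
  assumes r: "1 \<le> r" "r \<le> n"
    and distinct: "\<forall>x\<in>r_subsets n r. \<forall>y\<in>r_subsets n r. bsum x = bsum y \<longrightarrow> x = y"
    and small: "\<forall>x\<in>r_subsets n r. \<forall>y\<in>r_subsets n r. \<bar>bsum x - bsum y\<bar> < int p"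
    and binom: "n choose r > 4"
    and bnd: "\<forall>S. S \<subseteq> {1..n} \<longrightarrow> \<bar>bsum S - \<beta>\<bar> < int p"
  shows "real (card {S. S \<subseteq> {1..n} \<and> bsum S = \<beta>}) / 2 ^ n
     \<le> 192 * real r / (sqrt (real n) * real (n choose r)) + 2 / real p
        + exp (- real (nat \<lfloor>real n / (32 * (real r)\<^sup>2)\<rfloor>))"
proof -
  define c0 where "c0 = sqrt (real n) / (2 * real r)"
  define C where "C = real (n choose r)"
  define K where "K = 4 * real p / C"
  define L where "L = nat \<lfloor>c0\<^sup>2 / 8\<rfloor>"
  have C4: "C > 4" using binom unfolding C_def by simp
  then have "C > 0" by simp
  have c0_pos: "c0 > 0" unfolding c0_def using r by simp
  have K: "K < real p" "K \<ge> 0" unfolding K_def using C4 p_pos by (simp_all add: field_simps)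
  have sublevel_K: "real (card (sublevel c0)) \<le> K"
    using card_sublevel_le[OF distinct small r] \<open>C > 0\<close> unfolding K_def c0_def C_def
    by (simp add: pos_le_divide_eq mult.commute)
  have "c0\<^sup>2 / 8 = real n / (32 * (real r)\<^sup>2)"
    unfolding c0_def by (simp add: field_simps)
  then have L_eq: "L = nat \<lfloor>real n / (32 * (real r)\<^sup>2)\<rfloor>" unfolding L_def by simp
  have "real (card {t \<in> {..<p}. (G t)\<^sup>2 / 8 \<le> real l + 1}) \<le> 6 * K / c0 * (real l + 1) + 1"
    if "l < L" for l
  proof (rule card_G_level_le[OF sublevel_K K(1,2) _ c0_pos])
    have "real l + 1 \<le> real L" using that by simp
    also have "real L = of_int \<lfloor>c0\<^sup>2 / 8\<rfloor>" unfolding L_def by simp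
    also have "\<dots> \<le> c0\<^sup>2 / 8" by (rule of_int_floor_le)
    finally show "8 * (real l + 1) \<le> c0\<^sup>2" by simp
  qed
  then have "(\<Sum>t<p. exp (- ((G t)\<^sup>2 / 8))) \<le> 6 * K / c0 * 4 + 2 + real p * exp (- real L)"
    using K c0_pos by (intro sum_exp_neg_le_levels) simp_all
  then have "(\<Sum>t<p. exp (- (G t)\<^sup>2 / 8)) / real p \<le> (24 * K / c0 + 2 + real p * exp (- real L)) / real p"
    using p_pos by (simp add: divide_right_mono)
  also have "\<dots> = 192 * real r / (sqrt (real n) * C) + 2 / real p + exp (- real L)"
    unfolding K_def c0_def using p_pos C4 r by (simp add: field_simps)
  finally show ?thesis using card_fiber_le_sum_exp[OF bnd] unfolding C_def L_eq by linarith
qed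

end

section \<open>Integer weights\<close>

lemma abs_sum_le_sum_abs_subset:
  fixes b :: "nat \<Rightarrow> int"
  assumes "x \<subseteq> {1..n}"
  shows "\<bar>\<Sum>i\<in>x. b i\<bar> \<le> (\<Sum>i\<in>{1..n}. \<bar>b i\<bar>)"
proof -
  have "\<bar>\<Sum>i\<in>x. b i\<bar> \<le> (\<Sum>i\<in>x. \<bar>b i\<bar>)" by (rule sum_abs)
  also have "\<dots> \<le> (\<Sum>i\<in>{1..n}. \<bar>b i\<bar>)" by (rule sum_mono2) (use assms in auto)
  finally show ?thesis .
qed

text \<open>Once p exceeds twice the total weight, distinct subset sums stay distinct modulo p, and
  the error term \<open>2 / p\<close> can be made arbitrarily small.\<close>
lemma card_int_fiber_le:
  fixes b :: "nat \<Rightarrow> int"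
  assumes r: "1 \<le> r" "r \<le> n"
    and distinct: "\<forall>x\<in>r_subsets n r. \<forall>y\<in>r_subsets n r. (\<Sum>i\<in>x. b i) = (\<Sum>i\<in>y. b i) \<longrightarrow> x = y"
    and binom: "n choose r > 4"
  shows "real (card {S. S \<subseteq> {1..n} \<and> (\<Sum>i\<in>S. b i) = \<beta>}) / 2 ^ n
     \<le> 192 * real r / (sqrt (real n) * real (n choose r))
        + exp (- real (nat \<lfloor>real n / (32 * (real r)\<^sup>2)\<rfloor>))" (is "?P \<le> ?M")
proof (cases "\<bar>\<beta>\<bar> \<le> (\<Sum>i\<in>{1..n}. \<bar>b i\<bar>)")
  case False
  then have "{S. S \<subseteq> {1..n} \<and> (\<Sum>i\<in>S. b i) = \<beta>} = {}"
    using abs_sum_le_sum_abs_subset by force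
  then show ?thesis by (simp only: card.empty) simp
next
  case True
  define B where "B = (\<Sum>i\<in>{1..n}. \<bar>b i\<bar>)"
  have "?P \<le> ?M + e" if e: "e > 0" for e
  proof -
    obtain p where p: "prime p" "p > nat (2 * B) + nat \<lceil>2 / e\<rceil>" using bigger_prime by blast
    interpret weights_mod_prime p b n by unfold_locales (rule p(1))
    have B_p: "2 * B < int p" using p(2) by linarith
    have small: "\<bar>bsum x - y\<bar> < int p" if "x \<subseteq> {1..n}" "\<bar>y\<bar> \<le> B" for x y
      using abs_sum_le_sum_abs_subset[OF that(1), of b] that(2) B_p unfolding bsum_def B_def by linarith
    have "\<forall>x\<in>r_subsets n r. \<forall>y\<in>r_subsets n r. bsum x = bsum y \<longrightarrow> x = y"
      using distinct unfolding bsum_def by blast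
    moreover have "\<forall>x\<in>r_subsets n r. \<forall>y\<in>r_subsets n r. \<bar>bsum x - bsum y\<bar> < int p"
      using small abs_sum_le_sum_abs_subset[of _ n b] unfolding r_subsets_def bsum_def B_def by blast
    moreover have "\<forall>S. S \<subseteq> {1..n} \<longrightarrow> \<bar>bsum S - \<beta>\<bar> < int p"
      using small True unfolding B_def by blast
    ultimately have "?P \<le> 192 * real r / (sqrt (real n) * real (n choose r)) + 2 / real p
        + exp (- real (nat \<lfloor>real n / (32 * (real r)\<^sup>2)\<rfloor>))"
      using card_fiber_le[OF r _ _ binom] unfolding bsum_def by blast
    moreover have "2 / real p \<le> e"
    proof -
      have "2 / e \<le> real p" using p(2) by linarith
      then show ?thesis using e p_pos by (simp add: field_simps)
    qed
    ultimately show ?thesis by simp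
  qed
  then show ?thesis by (rule field_le_epsilon)
qed

lemma subset_sum_gaps_bounded_below:
  fixes a :: "nat \<Rightarrow> real"
  obtains \<delta> where "\<delta> > 0" "\<And>x y. x \<subseteq> {1..n} \<Longrightarrow> y \<subseteq> {1..n} \<Longrightarrow>
    (\<Sum>i\<in>x. a i) \<noteq> (\<Sum>i\<in>y. a i) \<Longrightarrow> \<delta> \<le> \<bar>(\<Sum>i\<in>x. a i) - (\<Sum>i\<in>y. a i)\<bar>"
proof -
  define D where "D = (\<lambda>(x, y). \<bar>(\<Sum>i\<in>x. a i) - (\<Sum>i\<in>y. a i)\<bar>) ` (Pow {1..n} \<times> Pow {1..n}) - {0}"
  have "finite D" unfolding D_def by simp
  show ?thesis
  proof (rule that[of "if D = {} then 1 else Min D"])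
    show "(if D = {} then 1 else Min D) > 0" using \<open>finite D\<close> by (auto simp: D_def)
    fix x y assume "x \<subseteq> {1..n}" "y \<subseteq> {1..n}" "(\<Sum>i\<in>x. a i) \<noteq> (\<Sum>i\<in>y. a i)"
    then have "\<bar>(\<Sum>i\<in>x. a i) - (\<Sum>i\<in>y. a i)\<bar> \<in> D" unfolding D_def by force
    then show "(if D = {} then 1 else Min D) \<le> \<bar>(\<Sum>i\<in>x. a i) - (\<Sum>i\<in>y. a i)\<bar>"
      using \<open>finite D\<close> by auto
  qed
qed

text \<open>Simultaneous Dirichlet approximation \<open>\<bar>q a\<^sub>i - b\<^sub>i\<bar> < 1 / N\<close>, with N so large that the
  accumulated error \<open>2 n / N\<close> stays below 1 and below the smallest nonzero gap between
  subset sums.\<close>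
lemma exists_int_weights_same_subset_sum_eqs:
  fixes a :: "nat \<Rightarrow> real" and n :: nat
  obtains b :: "nat \<Rightarrow> int" where "\<And>x y. x \<subseteq> {1..n} \<Longrightarrow> y \<subseteq> {1..n} \<Longrightarrow>
            (\<Sum>i\<in>x. a i) = (\<Sum>i\<in>y. a i) \<longleftrightarrow> (\<Sum>i\<in>x. b i) = (\<Sum>i\<in>y. b i)"
proof -
  obtain \<delta> :: real where \<delta>_pos: "\<delta> > 0" and \<delta>_le: "\<And>x y. x \<subseteq> {1..n} \<Longrightarrow> y \<subseteq> {1..n} \<Longrightarrow>
      (\<Sum>i\<in>x. a i) \<noteq> (\<Sum>i\<in>y. a i) \<Longrightarrow> \<delta> \<le> \<bar>(\<Sum>i\<in>x. a i) - (\<Sum>i\<in>y. a i)\<bar>"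
    using subset_sum_gaps_bounded_below by blast
  define N :: nat where "N = nat \<lceil>2 * real n / \<delta>\<rceil> + 2 * n + 1"
  have N_pos: "N > 0" unfolding N_def by simp
  have N_large: "2 * real n / real N < 1" "2 * real n / real N < \<delta>"
  proof -
    have "2 * real n < real N" unfolding N_def by simp
    then show "2 * real n / real N < 1" using N_pos by simp
    have "2 * real n / \<delta> < real N" unfolding N_def by linarith
    then show "2 * real n / real N < \<delta>" using \<delta>_pos N_pos by (simp add: field_simps)
  qed
  obtain q b where q: "0 < q" and approx: "\<And>i. i < Suc n \<Longrightarrow> \<bar>of_int q * a i - of_int (b i)\<bar> < 1 / real N"
    using Dirichlet_approx_simult[OF N_pos, where \<theta>=a and n="Suc n"] by blast
  define err where "err x = (\<Sum>i\<in>x. of_int q * a i - of_int (b i))" for x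
  have err_le: "\<bar>err x\<bar> \<le> real n / real N" if "x \<subseteq> {1..n}" for x
  proof -
    have "\<bar>of_int q * a i - of_int (b i)\<bar> \<le> 1 / real N" if "i \<in> x" for i
      using approx[of i] \<open>x \<subseteq> {1..n}\<close> that by force
    then have "\<bar>err x\<bar> \<le> (\<Sum>i\<in>x. 1 / real N)"
      unfolding err_def by (intro order_trans[OF sum_abs sum_mono])
    also have "\<dots> \<le> real n / real N"
      using card_mono[OF _ that] by (simp add: divide_right_mono)
    finally show ?thesis .
  qed
  show ?thesis
  proof (rule that)
    fix x y assume xy: "x \<subseteq> {1..n}" "y \<subseteq> {1..n}"
    define d where "d = (\<Sum>i\<in>x. a i) - (\<Sum>i\<in>y. a i)"
    have diff: "real_of_int ((\<Sum>i\<in>x. b i) - (\<Sum>i\<in>y. b i)) = of_int q * d - (err x - err y)"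
      unfolding err_def d_def by (simp add: sum_subtractf sum_distrib_left algebra_simps)
    have err_diff: "\<bar>err x - err y\<bar> < 1" "\<bar>err x - err y\<bar> < \<delta>"
      using err_le[OF xy(1)] err_le[OF xy(2)] N_large by linarith+
    show "(\<Sum>i\<in>x. a i) = (\<Sum>i\<in>y. a i) \<longleftrightarrow> (\<Sum>i\<in>x. b i) = (\<Sum>i\<in>y. b i)"
    proof
      assume "(\<Sum>i\<in>x. a i) = (\<Sum>i\<in>y. a i)"
      then have "\<bar>real_of_int ((\<Sum>i\<in>x. b i) - (\<Sum>i\<in>y. b i))\<bar> < 1"
        using diff err_diff unfolding d_def by simp
      then show "(\<Sum>i\<in>x. b i) = (\<Sum>i\<in>y. b i)" by linarith
    next
      assume "(\<Sum>i\<in>x. b i) = (\<Sum>i\<in>y. b i)"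
      then have "\<bar>of_int q * d\<bar> < \<delta>" using diff err_diff by simp
      moreover have "\<bar>d\<bar> \<le> \<bar>of_int q * d\<bar>" using q by (simp add: abs_mult mult_le_cancel_right1)
      ultimately show "(\<Sum>i\<in>x. a i) = (\<Sum>i\<in>y. a i)" using \<delta>_le[OF xy] unfolding d_def by fastforce
    qed
  qed
qed

definition dissociated :: "nat \<Rightarrow> nat \<Rightarrow> (nat \<Rightarrow> real) \<Rightarrow> bool" where
  "dissociated n k a \<longleftrightarrow> (\<forall>x y. x \<subseteq> {1..n} \<longrightarrow> y \<subseteq> {1..n} \<longrightarrow> x \<inter> y = {} \<longrightarrow>
     (x \<noteq> {} \<or> y \<noteq> {}) \<longrightarrow> card x + card y \<le> k \<longrightarrow> (\<Sum>i\<in>x. a i) \<noteq> (\<Sum>j\<in>y. a j))"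

lemma dissociated_imp_r_subset_sums_distinct:
  assumes "dissociated n (2 * r) a" "x \<in> r_subsets n r" "y \<in> r_subsets n r"
    and "(\<Sum>i\<in>x. a i) = (\<Sum>i\<in>y. a i)"
  shows "x = y"
proof (rule ccontr)
  assume "x \<noteq> y"
  have x: "x \<subseteq> {1..n}" "card x = r" "finite x" and y: "y \<subseteq> {1..n}" "card y = r" "finite y"
    using assms(2,3) finite_subset unfolding r_subsets_def by auto
  have "x - y \<subseteq> {1..n}" "y - x \<subseteq> {1..n}" "(x - y) \<inter> (y - x) = {}" "x - y \<noteq> {} \<or> y - x \<noteq> {}"
    using x y \<open>x \<noteq> y\<close> by auto
  moreover have "card (x - y) + card (y - x) \<le> 2 * r"
    using card_mono[OF x(3), of "x - y"] card_mono[OF y(3), of "y - x"] x y by auto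
  moreover have "(\<Sum>i\<in>x - y. a i) = (\<Sum>i\<in>y - x. a i)"
    using sum.Int_Diff[OF x(3), of a y] sum.Int_Diff[OF y(3), of a x] assms(4) by (simp add: Int_commute)
  ultimately show False using assms(1) unfolding dissociated_def by blast
qed

lemma four_less_binomial:
  assumes r: "r \<ge> 1" and n: "real n \<ge> 32 * (real r)\<^sup>2"
  shows "n choose r > 4"
proof -
  have "real r \<le> (real r)\<^sup>2" using r by (simp add: power2_eq_square)
  then have rn: "r \<le> n" using n by linarith
  have "real n / real r \<ge> 32 * real r"
    using n r by (simp add: field_simps power2_eq_square)
  moreover have "32 * real r \<ge> 1" using r by simp
  ultimately have "32 * real r \<le> (real n / real r) ^ r"
    using r by (metis One_nat_def order.trans power_increasing power_one_right)
  also have "\<dots> \<le> real (n choose r)" by (rule binomial_ge_n_over_k_pow_k[OF rn])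
  finally show ?thesis using r by simp
qed

lemma prob_sum_le_large_n:
  assumes r: "r \<ge> 1" and n: "real n \<ge> 32 * (real r)\<^sup>2" and dis: "dissociated n (2 * r) a"
  shows "prob_sum n a \<alpha> \<le> 192 * real r / (sqrt (real n) * real (n choose r))
        + exp (- real (nat \<lfloor>real n / (32 * (real r)\<^sup>2)\<rfloor>))"
proof -
  obtain b :: "nat \<Rightarrow> int" where b: "\<And>x y. x \<subseteq> {1..n} \<Longrightarrow> y \<subseteq> {1..n} \<Longrightarrow>
      (\<Sum>i\<in>x. a i) = (\<Sum>i\<in>y. a i) \<longleftrightarrow> (\<Sum>i\<in>x. b i) = (\<Sum>i\<in>y. b i)"
    using exists_int_weights_same_subset_sum_eqs by blast
  have binom: "n choose r > 4" by (rule four_less_binomial[OF r n])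
  then have rn: "r \<le> n" using binomial_eq_0[of n r] by (cases "r \<le> n") auto
  have distinct: "\<forall>x\<in>r_subsets n r. \<forall>y\<in>r_subsets n r. (\<Sum>i\<in>x. b i) = (\<Sum>i\<in>y. b i) \<longrightarrow> x = y"
  proof (intro ballI impI)
    fix x y assume xy: "x \<in> r_subsets n r" "y \<in> r_subsets n r" "(\<Sum>i\<in>x. b i) = (\<Sum>i\<in>y. b i)"
    then have "(\<Sum>i\<in>x. a i) = (\<Sum>i\<in>y. a i)" using b unfolding r_subsets_def by blast
    then show "x = y" by (rule dissociated_imp_r_subset_sums_distinct[OF dis xy(1,2)])
  qed
  show ?thesis
  proof (cases "\<exists>S0. S0 \<subseteq> {1..n} \<and> (\<Sum>i\<in>S0. a i) = \<alpha>")
    case False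
    then have "prob_sum n a \<alpha> = 0" unfolding prob_sum_def by simp
    then show ?thesis by simp
  next
    case True
    then obtain S0 where S0: "S0 \<subseteq> {1..n}" "(\<Sum>i\<in>S0. a i) = \<alpha>" by blast
    have "{S. S \<subseteq> {1..n} \<and> (\<Sum>i\<in>S. a i) = \<alpha>} = {S. S \<subseteq> {1..n} \<and> (\<Sum>i\<in>S. b i) = (\<Sum>i\<in>S0. b i)}"
      using b[OF _ S0(1)] S0(2) by auto
    then show ?thesis
      unfolding prob_sum_def using card_int_fiber_le[OF r rn distinct binom] by simp
  qed
qed

lemma prob_sum_le_1: "prob_sum n a \<alpha> \<le> 1"
proof -
  have "card {S. S \<subseteq> {1..n} \<and> (\<Sum>i\<in>S. a i) = \<alpha>} \<le> card (Pow {1..n})"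
    by (rule card_mono) auto
  then have "real (card {S. S \<subseteq> {1..n} \<and> (\<Sum>i\<in>S. a i) = \<alpha>}) \<le> 2 ^ n"
    by (simp add: card_Pow flip: of_nat_le_iff)
  then show ?thesis unfolding prob_sum_def by simp
qed

lemma exp_neg_nat_floor_le:
  fixes x :: real
  assumes x: "x > 0" and m: "m \<ge> 1"
  shows "exp (- real (nat \<lfloor>x\<rfloor>)) \<le> exp 1 * (real m / x) ^ m"
proof -
  have "exp (- real (nat \<lfloor>x\<rfloor>)) \<le> exp (1 - x)" using x by simp linarith
  also have "\<dots> = exp 1 / exp (x / real m) ^ m"
    using m by (simp add: exp_diff exp_of_nat_mult[symmetric])
  also have "\<dots> \<le> exp 1 / (x / real m) ^ m"
  proof (rule divide_left_mono)
    have "x / real m \<le> exp (x / real m)" using exp_ge_add_one_self[of "x / real m"] by linarith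
    then show "(x / real m) ^ m \<le> exp (x / real m) ^ m" by (rule power_mono) (use x in simp)
  qed (use x m in simp_all)
  finally show ?thesis by (simp add: power_divide)
qed

lemma powr_minus_nat_minus_half:
  assumes "n \<ge> 1"
  shows "real n powr (- real r - 1/2) = 1 / (real n ^ r * sqrt (real n))"
proof -
  have "real n powr (- real r - 1/2) = inverse (real n powr real r * real n powr (1/2))"
    by (simp add: powr_minus[symmetric] powr_add[symmetric] algebra_simps)
  then show ?thesis using assms by (simp add: powr_realpow powr_half_sqrt inverse_eq_divide)
qed

definition rho_bound_const :: "nat \<Rightarrow> real" where
  "rho_bound_const r = 192 * real r ^ (r + 1) + exp 1 * (real (r + 1) * (32 * (real r)\<^sup>2)) ^ (r + 1)
     + (32 * (real r)\<^sup>2) ^ (r + 1)"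

text \<open>For \<open>n \<ge> 32 r\<^sup>2\<close> both terms of the bound in prob_sum_le_large_n are of order \<open>n\<^sup>-\<^sup>r\<^sup>-\<^sup>1\<^sup>/\<^sup>2\<close>, using
  \<open>binom n r \<ge> (n / r)\<^sup>r\<close> and \<open>exp (- x) \<le> e ((r + 1) / x)\<^sup>r\<^sup>+\<^sup>1\<close>.\<close>
lemma large_n_bound_le:
  fixes r n :: nat
  assumes r: "r \<ge> 1" and n: "real n \<ge> 32 * (real r)\<^sup>2"
  shows "192 * real r / (sqrt (real n) * real (n choose r))
        + exp (- real (nat \<lfloor>real n / (32 * (real r)\<^sup>2)\<rfloor>))
      \<le> (192 * real r ^ (r + 1) + exp 1 * (real (r + 1) * (32 * (real r)\<^sup>2)) ^ (r + 1))
         / (real n ^ r * sqrt (real n))"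
proof -
  define Q where "Q = real n ^ r * sqrt (real n)"
  have "real r \<le> (real r)\<^sup>2" using r by (simp add: power2_eq_square)
  then have n1: "real n \<ge> 1" and rn: "r \<le> n" using n r by linarith+
  have Q_pos: "Q > 0" unfolding Q_def using n1 by simp
  have "sqrt (real n) * (real n / real r) ^ r \<le> sqrt (real n) * real (n choose r)"
    using binomial_ge_n_over_k_pow_k[OF rn] by (rule mult_left_mono) simp
  then have "192 * real r / (sqrt (real n) * real (n choose r))
      \<le> 192 * real r / (sqrt (real n) * (real n / real r) ^ r)"
    using n1 r zero_less_binomial[OF rn] by (intro divide_left_mono) auto
  also have "\<dots> = 192 * real r ^ (r + 1) / Q"
    unfolding Q_def using r n1 by (simp add: field_simps)
  finally have first: "192 * real r / (sqrt (real n) * real (n choose r)) \<le> 192 * real r ^ (r + 1) / Q" .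
  have "exp (- real (nat \<lfloor>real n / (32 * (real r)\<^sup>2)\<rfloor>))
      \<le> exp 1 * (real (r + 1) * (32 * (real r)\<^sup>2)) ^ (r + 1) / real n ^ (r + 1)"
    using exp_neg_nat_floor_le[of "real n / (32 * (real r)\<^sup>2)" "r + 1"] n1 r
    by (simp add: power_divide)
  also have "\<dots> \<le> exp 1 * (real (r + 1) * (32 * (real r)\<^sup>2)) ^ (r + 1) / Q"
  proof (rule divide_left_mono)
    have "sqrt (real n) \<le> real n" using n1 by (intro real_le_lsqrt) (auto simp: power2_eq_square)
    then show "Q \<le> real n ^ (r + 1)" unfolding Q_def using n1 by (simp add: mult_left_mono)
  qed (use Q_pos n1 in simp_all)
  finally show ?thesis using first unfolding Q_def by (simp add: add_divide_distrib)
qed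

lemma small_n_bound_ge_1:
  fixes r n :: nat
  assumes n1: "n \<ge> 1" and n: "real n < 32 * (real r)\<^sup>2"
  shows "1 \<le> (32 * (real r)\<^sup>2) ^ (r + 1) / (real n ^ r * sqrt (real n))"
proof -
  have "sqrt (real n) \<le> real n" using n1 by (intro real_le_lsqrt) (auto simp: power2_eq_square)
  then have "real n ^ r * sqrt (real n) \<le> real n ^ r * real n" by (rule mult_left_mono) simp
  also have "\<dots> = real n ^ (r + 1)" by simp
  also have "\<dots> \<le> (32 * (real r)\<^sup>2) ^ (r + 1)" by (rule power_mono) (use n in auto)
  finally show ?thesis using n1 by simp
qed

lemma prob_sum_le_rho_bound_const:
  assumes r: "r \<ge> 1" and n1: "n \<ge> 1" and dis: "dissociated n (2 * r) a"
  shows "prob_sum n a \<alpha> \<le> rho_bound_const r / (real n ^ r * sqrt (real n))"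
proof -
  let ?Q = "real n ^ r * sqrt (real n)"
  let ?large = "192 * real r ^ (r + 1) + exp 1 * (real (r + 1) * (32 * (real r)\<^sup>2)) ^ (r + 1)"
  let ?small = "(32 * (real r)\<^sup>2) ^ (r + 1)"
  have nonneg: "?large / ?Q \<ge> 0" "?small / ?Q \<ge> 0" by simp_all
  have "prob_sum n a \<alpha> \<le> ?large / ?Q + ?small / ?Q"
  proof (cases "real n \<ge> 32 * (real r)\<^sup>2")
    case True
    have "prob_sum n a \<alpha> \<le> ?large / ?Q"
      by (rule order_trans[OF prob_sum_le_large_n[OF r True dis] large_n_bound_le[OF r True]])
    then show ?thesis using nonneg by linarith
  next
    case False
    then have "real n < 32 * (real r)\<^sup>2" by simp
    have "prob_sum n a \<alpha> \<le> ?small / ?Q"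
      by (rule order_trans[OF prob_sum_le_1 small_n_bound_ge_1[OF n1 \<open>real n < 32 * (real r)\<^sup>2\<close>]])
    then show ?thesis using nonneg by linarith
  qed
  then show ?thesis unfolding rho_bound_const_def by (simp add: add_divide_distrib)
qed

theorem theorem2:
  fixes r :: nat
  assumes "r \<ge> 1"
  shows "\<exists>C > 0. \<forall>(n::nat) (a::nat \<Rightarrow> real). n \<ge> 1 \<longrightarrow>
     (\<forall>x y. x \<subseteq> {1..n} \<longrightarrow> y \<subseteq> {1..n} \<longrightarrow> x \<inter> y = {} \<longrightarrow>
        (x \<noteq> {} \<or> y \<noteq> {}) \<longrightarrow> card x + card y \<le> 2 * r \<longrightarrow>
        (\<Sum>i\<in>x. a i) \<noteq> (\<Sum>j\<in>y. a j)) \<longrightarrow>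
     rho n a \<le> C * real n powr (- real r - 1/2)"
proof (intro exI[of _ "rho_bound_const r"] conjI allI impI)
  show "rho_bound_const r > 0" unfolding rho_bound_const_def using assms by (simp add: add_pos_nonneg)
next
  fix n :: nat and a :: "nat \<Rightarrow> real"
  assume n: "n \<ge> 1" and "\<forall>x y. x \<subseteq> {1..n} \<longrightarrow> y \<subseteq> {1..n} \<longrightarrow> x \<inter> y = {} \<longrightarrow>
        (x \<noteq> {} \<or> y \<noteq> {}) \<longrightarrow> card x + card y \<le> 2 * r \<longrightarrow> (\<Sum>i\<in>x. a i) \<noteq> (\<Sum>j\<in>y. a j)"
  then have "dissociated n (2 * r) a" unfolding dissociated_def by blast
  then have "rho n a \<le> rho_bound_const r / (real n ^ r * sqrt (real n))"
    unfolding rho_def by (intro cSUP_least prob_sum_le_rho_bound_const[OF assms n]) auto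
  then show "rho n a \<le> rho_bound_const r * real n powr (- real r - 1/2)"
    by (simp add: powr_minus_nat_minus_half[OF n])
qed

end
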